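(* Let $L\in\{1,2,\dots,q-1\}$, let $\mathcal C$ be a linear $[n,k]$ code over $F=\mathrm{GF}(q)$, and let $\tau\in\mathbb Z_{\ge 0}$ satisfy $\tau\ge \frac{L(n-k)}{L+1}$. If $\mathcal C$ is $(\tau,L)$-list decodable, then $\mathcal C$ is MDS (i.e., its minimum distance is $n-k+1$).
   Context: $F=\mathrm{GF}(q)$. For $L\in\mathbb Z^+$ and $\tau\in\mathbb Z_{\ge0}$, a code $\mathcal C\subseteq F^n$ is $(\tau,L)$-list decodable if for every $y\in F^n$ at most $L$ codewords of $\mathcal C$ lie at Hamming distance at most $\tau$ from $y$. *)

theory Defs
  imports "HOL-Analysis.Analysis"
begin

text \<open>Codes of length n = CARD('n) over the finite field F = 'a (q = CARD('a)).\<close>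

definition hamming_dist :: "'a ^ 'n \<Rightarrow> 'a ^ 'n \<Rightarrow> nat" where
  "hamming_dist x y = card {i. x $ i \<noteq> y $ i}"

definition linear_code :: "('a::field ^ 'n) set \<Rightarrow> nat \<Rightarrow> bool" where
  "linear_code C k \<longleftrightarrow> vec.subspace C \<and> vec.dim C = k"

definition list_decodable :: "('a ^ 'n) set \<Rightarrow> nat \<Rightarrow> nat \<Rightarrow> bool" where
  "list_decodable C \<tau> L \<longleftrightarrow>
     (\<forall>y. card {c \<in> C. hamming_dist c y \<le> \<tau>} \<le> L)"

definition min_distance :: "('a ^ 'n) set \<Rightarrow> nat" where
  "min_distance C = Min {hamming_dist c c' | c c'. c \<in> C \<and> c' \<in> C \<and> c \<noteq> c'}"

end

theory Submission
  imports Defs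
begin

(* A k-dimensional code meets the subspace of words vanishing on k - 1 fixed coordinates
nontrivially, so it has a nonzero codeword of weight at most n - k + 1 (Singleton bound).
Conversely, if c is a nonzero codeword of weight w with (L + 1)(w - \<tau>) \<le> w, split the support
of c into L + 1 classes of size at least w - \<tau> and let y agree with a_j c on the j-th class,
for L + 1 distinct scalars a_j; then all the codewords a_j c lie within distance \<tau> of y, which
contradicts (\<tau>, L)-list decodability. The bound on \<tau> makes this apply to every w \<le> n - k, so every
nonzero codeword has weight at least n - k + 1, and for a linear code the minimum distance is
the minimum weight. *)

definition weight :: "'a::zero ^ 'n \<Rightarrow> nat" where
  "weight x = card {i. x $ i \<noteq> 0}"

lemma hamming_dist_eq_weight_diff:
  fixes x y :: "'a::ab_group_add ^ 'n"
  shows "hamming_dist x y = weight (x - y)"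
  by (simp add: hamming_dist_def weight_def)

lemma weight_le_card_Compl:
  fixes x :: "'a::zero ^ 'n::finite"
  assumes "\<forall>i\<in>I. x $ i = 0"
  shows "weight x \<le> CARD('n) - card I"
proof -
  have "weight x \<le> card (- I)"
    unfolding weight_def using assms by (intro card_mono) auto
  also have "\<dots> = CARD('n) - card I"
    by (simp add: Compl_eq_Diff_UNIV card_Diff_subset)
  finally show ?thesis .
qed

lemma subspace_exists_nonzero_vanishing_on:
  fixes C :: "('a::field ^ 'n) set"
  assumes C: "vec.subspace C" and I: "card I < vec.dim C"
  shows "\<exists>c\<in>C. c \<noteq> 0 \<and> (\<forall>i\<in>I. c $ i = 0)"
proof -
  define Z :: "('a ^ 'n) set" where "Z = {x. \<forall>i. i \<in> I \<longrightarrow> x $ i = 0}"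
  have dimZ: "vec.dim Z = CARD('n) - card I"
    using dim_substandard_cart[of "- I"]
    by (simp add: Z_def Compl_eq_Diff_UNIV card_Diff_subset)
  have "vec.dim {x + y |x y. x \<in> C \<and> y \<in> Z} + vec.dim (C \<inter> Z) = vec.dim C + vec.dim Z"
    using C by (intro vec.dim_sums_Int) (auto simp: Z_def subspace_substandard_cart)
  moreover have "vec.dim {x + y |x y. x \<in> C \<and> y \<in> Z} \<le> CARD('n)"
    by (rule dim_subset_UNIV_cart_gen)
  moreover have "card I \<le> CARD('n)"
    by (simp add: card_mono)
  ultimately have "vec.dim (C \<inter> Z) \<noteq> 0"
    using I dimZ by linarith
  then show ?thesis
    by (auto simp: Z_def)
qed

lemma subspace_exists_low_weight:
  fixes C :: "('a::field ^ 'n) set"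
  assumes C: "vec.subspace C" and k: "1 \<le> vec.dim C"
  shows "\<exists>c\<in>C. c \<noteq> 0 \<and> weight c \<le> CARD('n) - vec.dim C + 1"
proof -
  have "vec.dim C - 1 \<le> CARD('n)"
    using dim_subset_UNIV_cart_gen[of C] by linarith
  then obtain I :: "'n set" where I: "card I = vec.dim C - 1"
    using obtain_subset_with_card_n by blast
  then obtain c where c: "c \<in> C" "c \<noteq> 0" "\<forall>i\<in>I. c $ i = 0"
    using subspace_exists_nonzero_vanishing_on[OF C] k by (metis diff_less zero_less_one less_le_trans)
  have "weight c \<le> CARD('n) - (vec.dim C - 1)"
    using weight_le_card_Compl[OF c(3)] I by simp
  with c k dim_subset_UNIV_cart_gen[of C] show ?thesis
    by auto
qed

lemma exists_labelling_with_large_classes: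
  assumes "finite S" and "(L + 1) * m \<le> card S"
  shows "\<exists>blk :: 'b \<Rightarrow> nat. \<forall>j\<le>L. m \<le> card {i \<in> S. blk i = j}"
proof -
  obtain s where s: "bij_betw s {0..<card S} S"
    using ex_bij_betw_nat_finite[OF assms(1)] by blast
  define blk where "blk i = inv_into {0..<card S} s i div m" for i
  have "m \<le> card {i \<in> S. blk i = j}" if j: "j \<le> L" for j
  proof -
    have "(j + 1) * m \<le> card S"
      using j assms(2) by (meson add_le_mono1 le_trans mult_le_mono1)
    then have sub: "{j * m..<(j + 1) * m} \<subseteq> {0..<card S}"
      by auto
    have "s ` {j * m..<(j + 1) * m} \<subseteq> {i \<in> S. blk i = j}"
    proof
      fix i assume "i \<in> s ` {j * m..<(j + 1) * m}"
      then obtain t where t: "j * m \<le> t" "t < (j + 1) * m" "i = s t" by auto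
      then have "inv_into {0..<card S} s i = t"
        using s sub by (auto simp: bij_betw_def inv_into_f_f)
      moreover have "t div m = j"
        using t by (simp add: div_nat_eqI mult.commute)
      ultimately show "i \<in> {i \<in> S. blk i = j}"
        using s sub t by (auto simp: blk_def bij_betw_def)
    qed
    then have "card (s ` {j * m..<(j + 1) * m}) \<le> card {i \<in> S. blk i = j}"
      using assms(1) by (intro card_mono) auto
    moreover have "card (s ` {j * m..<(j + 1) * m}) = m"
      using s sub by (subst card_image) (auto simp: bij_betw_def intro: inj_on_subset)
    ultimately show ?thesis by simp
  qed
  then show ?thesis by blast
qed

lemma scalar_multiples_near_common_word:
  fixes c :: "'a::{finite,field} ^ 'n"
  assumes q: "L + 1 \<le> CARD('a)" and w: "(L + 1) * (weight c - \<tau>) \<le> weight c"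
  shows "\<exists>a y. inj_on a {..L} \<and> (\<forall>j\<le>L. hamming_dist (a j *s c) y \<le> \<tau>)"
proof -
  define S where "S = {i. c $ i \<noteq> 0}"
  obtain blk :: "'n \<Rightarrow> nat" where blk: "\<And>j. j \<le> L \<Longrightarrow> weight c - \<tau> \<le> card {i \<in> S. blk i = j}"
    using exists_labelling_with_large_classes[of S L "weight c - \<tau>"] w by (auto simp: S_def weight_def)
  obtain a :: "nat \<Rightarrow> 'a" where a: "inj_on a {..L}"
    using card_le_inj[of "{..L}" "UNIV :: 'a set"] q by auto
  define y :: "'a ^ 'n" where "y = (\<chi> i. a (blk i) * c $ i)"
  have "hamming_dist (a j *s c) y \<le> \<tau>" if j: "j \<le> L" for j
  proof -
    have "{i. (a j *s c) $ i \<noteq> y $ i} \<subseteq> S - {i \<in> S. blk i = j}"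
      by (auto simp: S_def y_def)
    then have "hamming_dist (a j *s c) y \<le> card (S - {i \<in> S. blk i = j})"
      unfolding hamming_dist_def by (intro card_mono) auto
    also have "\<dots> = weight c - card {i \<in> S. blk i = j}"
      by (subst card_Diff_subset) (auto simp: S_def weight_def)
    also have "\<dots> \<le> \<tau>"
      using blk[OF j] by linarith
    finally show ?thesis .
  qed
  with a show ?thesis by blast
qed

lemma list_decodable_weight_gt:
  fixes C :: "('a::{finite,field} ^ 'n) set"
  assumes C: "vec.subspace C" and q: "L + 1 \<le> CARD('a)" and dec: "list_decodable C \<tau> L"
    and c: "c \<in> C" "c \<noteq> 0"
  shows "weight c < (L + 1) * (weight c - \<tau>)"
proof (rule ccontr)
  assume "\<not> ?thesis"
  then have "(L + 1) * (weight c - \<tau>) \<le> weight c"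
    by simp
  then obtain a y where a: "inj_on a {..L}" and near: "\<forall>j\<le>L. hamming_dist (a j *s c) y \<le> \<tau>"
    using scalar_multiples_near_common_word[OF q] by blast
  have "inj_on (\<lambda>j. a j *s c) {..L}"
  proof (rule inj_onI)
    fix j j' assume "j \<in> {..L}" "j' \<in> {..L}" and eq: "a j *s c = a j' *s c"
    obtain i where "c $ i \<noteq> 0"
      using c(2) by (metis vec_eq_iff zero_index)
    with eq have "a j = a j'"
      by (metis mult_cancel_right vector_smult_component)
    with a show "j = j'"
      using \<open>j \<in> {..L}\<close> \<open>j' \<in> {..L}\<close> by (rule inj_onD)
  qed
  then have "L + 1 = card ((\<lambda>j. a j *s c) ` {..L})"
    by (simp add: card_image)
  also have "\<dots> \<le> card {x \<in> C. hamming_dist x y \<le> \<tau>}"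
    using near c(1) C by (intro card_mono) (auto intro: vec.subspace_scale)
  also have "\<dots> \<le> L"
    using dec by (simp add: list_decodable_def)
  finally show False by simp
qed

lemma min_distance_subspace:
  fixes C :: "('a::field ^ 'n) set"
  assumes "vec.subspace C"
  shows "min_distance C = Min {weight c |c. c \<in> C \<and> c \<noteq> 0}"
proof -
  have "{hamming_dist c c' |c c'. c \<in> C \<and> c' \<in> C \<and> c \<noteq> c'} = {weight c |c. c \<in> C \<and> c \<noteq> 0}"
  proof (intro equalityI subsetI)
    fix d assume "d \<in> {hamming_dist c c' |c c'. c \<in> C \<and> c' \<in> C \<and> c \<noteq> c'}"
    then obtain c c' where "c \<in> C" "c' \<in> C" "c \<noteq> c'" "d = weight (c - c')"
      by (auto simp: hamming_dist_eq_weight_diff)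
    with assms show "d \<in> {weight c |c. c \<in> C \<and> c \<noteq> 0}"
      by (auto intro: vec.subspace_diff)
  next
    fix d assume "d \<in> {weight c |c. c \<in> C \<and> c \<noteq> 0}"
    then obtain c where "c \<in> C" "c \<noteq> 0" "d = hamming_dist c 0"
      by (auto simp: hamming_dist_eq_weight_diff)
    with assms show "d \<in> {hamming_dist c c' |c c'. c \<in> C \<and> c' \<in> C \<and> c \<noteq> c'}"
      using vec.subspace_0 by blast
  qed
  then show ?thesis
    by (simp add: min_distance_def)
qed

theorem mainTheorem1:
  fixes C :: "('a::{finite,field} ^ 'n) set" and k L \<tau> :: nat
  assumes "1 \<le> L" and "L \<le> CARD('a) - 1"
    and "linear_code C k" and "1 \<le> k"
    and "real \<tau> \<ge> real L * (real CARD('n) - real k) / (real L + 1)"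
    and "list_decodable C \<tau> L"
  shows "min_distance C = CARD('n) - k + 1"
proof -
  have C: "vec.subspace C" and k: "vec.dim C = k"
    using assms(3) by (auto simp: linear_code_def)
  have q: "L + 1 \<le> CARD('a)"
    using assms(1,2) by linarith
  have \<tau>: "real L * (real CARD('n) - real k) \<le> real \<tau> * (real L + 1)"
    using assms(5) by (simp add: divide_le_eq add_pos_pos)
  have weight_ge: "CARD('n) - k + 1 \<le> weight c" if "c \<in> C" "c \<noteq> 0" for c
  proof (rule ccontr)
    assume "\<not> ?thesis"
    then have "real (weight c) \<le> real CARD('n) - real k"
      using dim_subset_UNIV_cart_gen[of C] k by linarith
    then have "real L * real (weight c) \<le> real \<tau> * (real L + 1)"
      using \<tau> by (meson mult_left_mono of_nat_0_le_iff order_trans)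
    then have "L * weight c \<le> \<tau> * (L + 1)"
      by (metis of_nat_add of_nat_mult of_nat_le_iff of_nat_1)
    then have "(L + 1) * (weight c - \<tau>) \<le> weight c"
      by (simp add: diff_mult_distrib2 algebra_simps)
    then show False
      using list_decodable_weight_gt[OF C q assms(6) that] by simp
  qed
  obtain c where c: "c \<in> C" "c \<noteq> 0" "weight c \<le> CARD('n) - k + 1"
    using subspace_exists_low_weight[OF C] k assms(4) by auto
  have "finite {weight c |c. c \<in> C \<and> c \<noteq> 0}"
    by (rule finite_subset[of _ "{..CARD('n)}"]) (auto simp: weight_def card_mono)
  then have "Min {weight c |c. c \<in> C \<and> c \<noteq> 0} = CARD('n) - k + 1"
    using weight_ge c by (intro Min_eqI) (auto intro: le_antisym)
  with C show ?thesis
    by (simp add: min_distance_subspace)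
qed

end
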